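(* Let $N\ge 5$ be odd, and let $G_{N,1}$ be the graph with vertex set $\mathbb Z_N$ in which two distinct vertices $i,j$ are adjacent if and only if $j-i\not\equiv\pm1\pmod N$. Put $\Delta=\sqrt{N(N-4)}$ and $\rho=\frac{N-2+\Delta}{2}$. Then $G_{N,1}$ has $m=\frac{N(N-3)}{2}$ edges, and for $u,v\in\mathbb Z_N$ with $q\in\{0,1,\dots,N-1\}$, $q\equiv v-u\pmod N$, the expected hitting time of $v$ by the simple random walk on $G_{N,1}$ started at $u$ is \[ H^{(1)}(u,v)=\frac{N(N-3)}{\Delta(\rho^N+1)}\left\{\rho^N-1+(-1)^q(\rho^q-\rho^{N-q})\right\}. \]
   Context: The simple random walk moves from the current vertex to a uniformly random neighbour; $H(u,v)$ is the expected number of steps to first reach $v$ starting from $u$. *)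

theory Defs
  imports Complex_Main "HOL-Number_Theory.Cong"
begin

text \<open>A finite simple graph is given by a vertex set V and a symmetric irreflexive
adjacency relation E.  The simple random walk moves from x to a uniformly random
neighbour of x in V.\<close>

definition nbrs :: "'a set \<Rightarrow> ('a \<Rightarrow> 'a \<Rightarrow> bool) \<Rightarrow> 'a \<Rightarrow> 'a set" where
  "nbrs V E x = {w \<in> V. E x w}"

text \<open>first_hit_prob V E v u n = probability that the simple random walk started at u
first reaches v at step n (i.e. the hitting time T_v equals n).\<close>

fun first_hit_prob :: "'a set \<Rightarrow> ('a \<Rightarrow> 'a \<Rightarrow> bool) \<Rightarrow> 'a \<Rightarrow> 'a \<Rightarrow> nat \<Rightarrow> real" where
  "first_hit_prob V E v u 0 = (if u = v then 1 else 0)"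
| "first_hit_prob V E v u (Suc n) =
     (if u = v then 0
      else (\<Sum>w\<in>nbrs V E u. first_hit_prob V E v w n) / real (card (nbrs V E u)))"

definition hitting_time :: "'a set \<Rightarrow> ('a \<Rightarrow> 'a \<Rightarrow> bool) \<Rightarrow> 'a \<Rightarrow> 'a \<Rightarrow> real" where
  "hitting_time V E u v = (\<Sum>n. real n * first_hit_prob V E v u n)"

definition GN1_adj :: "nat \<Rightarrow> nat \<Rightarrow> nat \<Rightarrow> bool" where
  "GN1_adj N i j \<longleftrightarrow> i \<noteq> j \<and> \<not> [int j - int i = 1] (mod int N)
                     \<and> \<not> [int j - int i = -1] (mod int N)"

definition GN1_edges :: "nat \<Rightarrow> nat set set" where
  "GN1_edges N = {{i, j} | i j. i < N \<and> j < N \<and> GN1_adj N i j}"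

end

theory Submission
  imports Defs
begin

(*
  On a finite graph without isolated vertices, every solution h of the linear system
  h v = 0, h u = 1 + (mean of h over the neighbours of u) for u ~= v, equals H(-,v). Writing P for
  the transition operator of the walk killed at v, the system reads h = 1 + P h away from v;
  iterating gives h u = (sum k<n. P_u(T_v > k)) + (P^n h) u, and |P^n h| <= (max |h|) P_u(T_v > n),
  so the survival probabilities are summable with sum h u, which is E_u T_v by the tail-sum formula.

  G_{N,1} is the complement of the N-cycle: u is adjacent to everything except itself and its two
  cycle neighbours. For h u = F ((v - u) mod N) the system becomes the recurrence
  F (q-1) + (N-2) F q + F (q+1) = (sum r<N. F r) + N - 3, with characteristic roots -rho and -1/rho.
  The symmetric solution kappa (rho^N - 1 + (-rho)^q + (-rho)^(N-q)) vanishes at q = 0 and q = N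
  because N is odd, and kappa is fixed by the constant term.
*)

section \<open>Hitting times as solutions of the hitting system\<close>

lemma sum_index_weighted_decrements:
  fixes p R :: "nat \<Rightarrow> real"
  assumes "\<And>n. p (Suc n) = R n - R (Suc n)"
  shows "(\<Sum>n<Suc M. real n * p n) = (\<Sum>k<M. R k - R M)"
proof (induction M)
  case (Suc M)
  have "(\<Sum>k<Suc M. R k - R (Suc M)) = (\<Sum>k<M. R k - R M) + real (Suc M) * (R M - R (Suc M))"
    by (simp add: sum_subtractf algebra_simps)
  then show ?case
    using Suc.IH assms[of M] by simp
qed simp

lemma tail_sum_formula:
  fixes p R :: "nat \<Rightarrow> real"
  assumes dec: "decseq R" and R_sums: "R sums s"
    and p_Suc: "\<And>n. p (Suc n) = R n - R (Suc n)"
  shows "(\<lambda>n. real n * p n) sums s"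
proof -
  have R_lim: "R \<longlonglongrightarrow> 0"
    using R_sums by (intro summable_LIMSEQ_zero sums_summable)
  have R_le: "R n \<le> R k" if "k \<le> n" for k n
    using dec that by (simp add: decseq_def)
  note partial = sum_index_weighted_decrements[of p R, OF p_Suc]
  have term_nonneg: "0 \<le> real n * p n" for n
    using R_le[of "n - 1" n] p_Suc[of "n - 1"] by (cases n) simp_all
  have upper: "(\<Sum>n<M. real n * p n) \<le> s" for M
  proof -
    have "(\<Sum>n<M. real n * p n) \<le> (\<Sum>n<Suc M. real n * p n)"
      using term_nonneg[of M] by simp
    also have "\<dots> \<le> (\<Sum>k<M. R k)"
      unfolding partial using decseq_ge[OF dec R_lim] by (intro sum_mono) simp
    also have "\<dots> \<le> s"
      using sum_le_suminf[OF sums_summable[OF R_sums], of "{..<M}"] decseq_ge[OF dec R_lim]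
        sums_unique[OF R_sums]
      by simp
    finally show ?thesis .
  qed
  have summable: "summable (\<lambda>n. real n * p n)"
    using term_nonneg upper by (rule summableI_nonneg_bounded)
  have lower: "(\<Sum>k<K. R k) \<le> (\<Sum>n. real n * p n)" for K
  proof (rule LIMSEQ_le_const2)
    show "(\<lambda>M. \<Sum>k<K. R k - R M) \<longlonglongrightarrow> (\<Sum>k<K. R k)"
      using tendsto_sum[of "{..<K}" "\<lambda>k M. R k - R M", OF tendsto_diff[OF tendsto_const R_lim]]
      by simp
    have "(\<Sum>k<K. R k - R M) \<le> (\<Sum>n. real n * p n)" if "K \<le> M" for M
    proof -
      have "(\<Sum>k<K. R k - R M) \<le> (\<Sum>k<M. R k - R M)"
        using that R_le by (intro sum_mono2) auto
      also have "\<dots> \<le> (\<Sum>n. real n * p n)"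
        unfolding partial[symmetric] using summable term_nonneg by (intro sum_le_suminf) auto
      finally show ?thesis .
    qed
    then show "\<exists>N. \<forall>M\<ge>N. (\<Sum>k<K. R k - R M) \<le> (\<Sum>n. real n * p n)"
      by blast
  qed
  have "s \<le> (\<Sum>n. real n * p n)"
    using R_sums unfolding sums_def by (rule LIMSEQ_le_const2) (use lower in blast)
  moreover have "(\<Sum>n. real n * p n) \<le> s"
    using summable upper by (rule suminf_le_const)
  ultimately show ?thesis
    using summable_sums[OF summable] by simp
qed

definition killed_step :: "'a set \<Rightarrow> ('a \<Rightarrow> 'a \<Rightarrow> bool) \<Rightarrow> 'a \<Rightarrow> ('a \<Rightarrow> real) \<Rightarrow> 'a \<Rightarrow> real" where
  "killed_step V E v f u =
     (if u = v then 0 else (\<Sum>w\<in>nbrs V E u. f w) / real (card (nbrs V E u)))"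

(* P_u(T_v > n) for the walk started at u *)
definition survival_prob :: "'a set \<Rightarrow> ('a \<Rightarrow> 'a \<Rightarrow> bool) \<Rightarrow> 'a \<Rightarrow> 'a \<Rightarrow> nat \<Rightarrow> real" where
  "survival_prob V E v u n = (killed_step V E v ^^ n) (\<lambda>w. if w = v then 0 else 1) u"

definition hitting_system :: "'a set \<Rightarrow> ('a \<Rightarrow> 'a \<Rightarrow> bool) \<Rightarrow> 'a \<Rightarrow> ('a \<Rightarrow> real) \<Rightarrow> bool" where
  "hitting_system V E v h \<longleftrightarrow> h v = 0 \<and>
     (\<forall>u\<in>V. u \<noteq> v \<longrightarrow> h u = 1 + (\<Sum>w\<in>nbrs V E u. h w) / real (card (nbrs V E u)))"

lemma hitting_system_target: "hitting_system V E v h \<Longrightarrow> h v = 0"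
  unfolding hitting_system_def by blast

lemma hitting_systemD:
  "hitting_system V E v h \<Longrightarrow> u \<in> V \<Longrightarrow> u \<noteq> v
     \<Longrightarrow> h u = 1 + (\<Sum>w\<in>nbrs V E u. h w) / real (card (nbrs V E u))"
  unfolding hitting_system_def by blast

lemma nbrs_in_vertices: "w \<in> nbrs V E u \<Longrightarrow> w \<in> V"
  by (simp add: nbrs_def)

lemma killed_step_at_target [simp]: "killed_step V E v f v = 0"
  by (simp add: killed_step_def)

lemma killed_step_cong:
  "(\<And>w. w \<in> nbrs V E u \<Longrightarrow> f w = g w) \<Longrightarrow> killed_step V E v f u = killed_step V E v g u"
  by (simp add: killed_step_def)

lemma killed_step_const:
  "killed_step V E v (\<lambda>_. c) u = (if u = v \<or> card (nbrs V E u) = 0 then 0 else c)"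
  by (simp add: killed_step_def)

lemma killed_step_add:
  "killed_step V E v (\<lambda>w. f w + g w) u = killed_step V E v f u + killed_step V E v g u"
  by (simp add: killed_step_def sum.distrib add_divide_distrib)

lemma killed_step_diff:
  "killed_step V E v (\<lambda>w. f w - g w) u = killed_step V E v f u - killed_step V E v g u"
  by (simp add: killed_step_def sum_subtractf diff_divide_distrib)

lemma killed_step_mult:
  "killed_step V E v (\<lambda>w. c * f w) u = c * killed_step V E v f u"
  by (simp add: killed_step_def sum_distrib_left)

lemma killed_step_sum:
  "killed_step V E v (\<lambda>w. \<Sum>k\<in>K. f k w) u = (\<Sum>k\<in>K. killed_step V E v (f k) u)"
  by (simp add: killed_step_def sum.swap[of _ K] sum_divide_distrib)

lemma killed_step_mono:
  "(\<And>w. w \<in> nbrs V E u \<Longrightarrow> f w \<le> g w) \<Longrightarrow> killed_step V E v f u \<le> killed_step V E v g u"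
  by (simp add: killed_step_def sum_mono divide_right_mono)

lemma abs_killed_step_le: "\<bar>killed_step V E v f u\<bar> \<le> killed_step V E v (\<lambda>w. \<bar>f w\<bar>) u"
  by (simp add: killed_step_def abs_div divide_right_mono sum_abs)

lemma survival_prob_0: "survival_prob V E v u 0 = (if u = v then 0 else 1)"
  by (simp add: survival_prob_def)

lemma survival_prob_Suc:
  "survival_prob V E v u (Suc n) = killed_step V E v (\<lambda>w. survival_prob V E v w n) u"
  by (simp add: survival_prob_def)

lemma survival_prob_nonneg: "0 \<le> survival_prob V E v u n"
proof (induction n arbitrary: u)
  case (Suc n)
  have "killed_step V E v (\<lambda>_. 0) u \<le> killed_step V E v (\<lambda>w. survival_prob V E v w n) u"
    using Suc.IH by (intro killed_step_mono)
  then show ?case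
    by (simp add: survival_prob_Suc killed_step_const)
qed (simp add: survival_prob_0)

lemma survival_prob_Suc_le: "survival_prob V E v u (Suc n) \<le> survival_prob V E v u n"
proof (induction n arbitrary: u)
  case 0
  have "killed_step V E v (\<lambda>w. survival_prob V E v w 0) u \<le> killed_step V E v (\<lambda>_. 1) u"
    by (intro killed_step_mono) (simp add: survival_prob_0)
  then show ?case
    by (simp add: survival_prob_Suc survival_prob_0 killed_step_const split: if_splits)
next
  case (Suc n)
  show ?case
    unfolding survival_prob_Suc[of V E v u] by (intro killed_step_mono Suc.IH)
qed

lemma decseq_survival_prob: "decseq (survival_prob V E v u)"
  using survival_prob_Suc_le by (intro decseq_SucI)

lemma survival_prob_le_1: "survival_prob V E v u n \<le> 1"
  using decseq_survival_prob[of V E v u, unfolded decseq_def, rule_format, of 0 n]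
  by (simp add: survival_prob_0 split: if_splits)

lemma hitting_system_fixpoint:
  assumes "hitting_system V E v h" and "u \<in> V"
  shows "h u = survival_prob V E v u 0 + killed_step V E v h u"
  using hitting_system_target[OF assms(1)] hitting_systemD[OF assms]
  by (cases "u = v") (simp_all add: survival_prob_0 killed_step_def)

lemma hitting_system_expand:
  assumes "hitting_system V E v h" and "u \<in> V"
  shows "h u = (\<Sum>k<n. survival_prob V E v u k) + (killed_step V E v ^^ n) h u"
  using assms(2)
proof (induction n arbitrary: u)
  case (Suc n)
  have "killed_step V E v h u
      = killed_step V E v (\<lambda>w. (\<Sum>k<n. survival_prob V E v w k) + (killed_step V E v ^^ n) h w) u"
  proof (rule killed_step_cong)
    fix w
    assume "w \<in> nbrs V E u"
    then show "h w = (\<Sum>k<n. survival_prob V E v w k) + (killed_step V E v ^^ n) h w"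
      by (rule Suc.IH[OF nbrs_in_vertices])
  qed
  also have "\<dots> = (\<Sum>k<n. survival_prob V E v u (Suc k)) + (killed_step V E v ^^ Suc n) h u"
    by (simp add: killed_step_add killed_step_sum survival_prob_Suc)
  finally show ?case
    using hitting_system_fixpoint[OF assms(1) Suc.prems]
    by (simp add: sum.lessThan_Suc_shift del: sum.lessThan_Suc)
qed simp

lemma abs_killed_iterate_le_survival:
  assumes "hitting_system V E v h" and "\<And>w. w \<in> V \<Longrightarrow> \<bar>h w\<bar> \<le> B" and "u \<in> V"
  shows "\<bar>(killed_step V E v ^^ n) h u\<bar> \<le> B * survival_prob V E v u n"
  using assms(3)
proof (induction n arbitrary: u)
  case 0
  from hitting_system_target[OF assms(1)] show ?case
    using assms(2)[OF "0"] by (cases "u = v") (simp_all add: survival_prob_0)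
next
  case (Suc n)
  have "\<bar>(killed_step V E v ^^ Suc n) h u\<bar> \<le> killed_step V E v (\<lambda>w. \<bar>(killed_step V E v ^^ n) h w\<bar>) u"
    unfolding funpow.simps comp_def by (rule abs_killed_step_le)
  also have "\<dots> \<le> killed_step V E v (\<lambda>w. B * survival_prob V E v w n) u"
  proof (rule killed_step_mono)
    fix w
    assume "w \<in> nbrs V E u"
    then show "\<bar>(killed_step V E v ^^ n) h w\<bar> \<le> B * survival_prob V E v w n"
      by (rule Suc.IH[OF nbrs_in_vertices])
  qed
  finally show ?case
    by (simp only: killed_step_mult survival_prob_Suc)
qed

lemma survival_prob_sums:
  assumes "finite V" and "hitting_system V E v h" and "u \<in> V"
  shows "survival_prob V E v u sums h u"
proof -
  define B where "B = (\<Sum>w\<in>V. \<bar>h w\<bar>)"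
  have h_le_B: "\<bar>h w\<bar> \<le> B" if "w \<in> V" for w
    unfolding B_def using assms(1) that by (intro member_le_sum) auto
  have "0 \<le> B"
    unfolding B_def by (simp add: sum_nonneg)
  let ?G = "\<lambda>n. (killed_step V E v ^^ n) h u"
  have G_bound: "\<bar>?G n\<bar> \<le> B * survival_prob V E v u n" for n
    using abs_killed_iterate_le_survival[OF assms(2) h_le_B assms(3)] .
  have G_le_B: "\<bar>?G n\<bar> \<le> B" for n
    using G_bound[of n] mult_left_le[OF survival_prob_le_1 \<open>0 \<le> B\<close>] by (rule order_trans)
  have "(\<Sum>k<n. survival_prob V E v u k) \<le> h u + B" for n
    using hitting_system_expand[OF assms(2,3), of n] abs_le_D2[OF G_le_B[of n]] by linarith
  then have "summable (survival_prob V E v u)"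
    by (intro summableI_nonneg_bounded survival_prob_nonneg)
  then have "survival_prob V E v u \<longlonglongrightarrow> 0"
    by (rule summable_LIMSEQ_zero)
  moreover have "\<forall>n. norm (?G n) \<le> norm (survival_prob V E v u n) * B"
    using G_bound by (simp add: mult.commute abs_of_nonneg[OF survival_prob_nonneg])
  ultimately have G_lim: "?G \<longlonglongrightarrow> 0"
    by (rule tendsto_0_le[OF _ always_eventually])
  have expand: "(\<lambda>n. \<Sum>k<n. survival_prob V E v u k) = (\<lambda>n. h u - ?G n)"
  proof
    show "(\<Sum>k<n. survival_prob V E v u k) = h u - ?G n" for n
      using hitting_system_expand[OF assms(2,3), of n] by linarith
  qed
  show ?thesis
    using tendsto_diff[OF tendsto_const G_lim, of "h u"] unfolding sums_def expand diff_zero .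
qed

lemma first_hit_prob_Suc:
  "first_hit_prob V E v u (Suc n) = killed_step V E v (\<lambda>w. first_hit_prob V E v w n) u"
  by (simp add: killed_step_def)

lemma first_hit_prob_0: "first_hit_prob V E v u 0 = 1 - survival_prob V E v u 0"
  by (simp add: survival_prob_0)

lemma first_hit_prob_Suc_eq:
  assumes "finite V" and "\<And>w. w \<in> V \<Longrightarrow> nbrs V E w \<noteq> {}" and "u \<in> V"
  shows "first_hit_prob V E v u (Suc n) = survival_prob V E v u n - survival_prob V E v u (Suc n)"
  using assms(3)
proof (induction n arbitrary: u)
  case 0
  have "card (nbrs V E u) \<noteq> 0"
    using assms(2)[OF "0"] finite_subset[OF _ assms(1)] by (auto simp: nbrs_def)
  then show ?case
    by (simp only: first_hit_prob_Suc first_hit_prob_0 killed_step_diff killed_step_const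
        survival_prob_Suc[symmetric]) (simp add: survival_prob_0)
next
  case (Suc n)
  have "first_hit_prob V E v u (Suc (Suc n))
      = killed_step V E v (\<lambda>w. survival_prob V E v w n - survival_prob V E v w (Suc n)) u"
    unfolding first_hit_prob_Suc[of V E v u "Suc n"]
    by (rule killed_step_cong) (rule Suc.IH[OF nbrs_in_vertices])
  then show ?case
    by (simp only: killed_step_diff survival_prob_Suc[symmetric])
qed

theorem hitting_time_eq_solution:
  assumes "finite V" and "\<And>w. w \<in> V \<Longrightarrow> nbrs V E w \<noteq> {}"
    and "hitting_system V E v h" and "u \<in> V"
  shows "hitting_time V E u v = h u"
proof -
  have "(\<lambda>n. real n * first_hit_prob V E v u n) sums h u"
    using decseq_survival_prob survival_prob_sums[OF assms(1,3,4)] first_hit_prob_Suc_eq[OF assms(1,2,4)]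
    by (rule tail_sum_formula)
  then show ?thesis
    unfolding hitting_time_def by (rule sums_unique[symmetric])
qed

section \<open>The complement of the cycle\<close>

lemma Suc_mod_if: "u < N \<Longrightarrow> Suc u mod N = (if Suc u = N then 0 else Suc u)"
  by (simp add: mod_Suc)

lemma pred_mod_if:
  assumes "u < (N::nat)"
  shows "(u + N - 1) mod N = (if u = 0 then N - 1 else u - 1)"
  using assms by (auto simp: le_mod_geq)

lemma diff_mod_if:
  assumes "w < (N::nat)" and "v < N"
  shows "(v + N - w) mod N = (if w \<le> v then v - w else v + N - w)"
  using assms by (auto simp: le_mod_geq)

lemma eq_Suc_mod_iff:
  assumes "u < N" and "w < N"
  shows "u = Suc w mod N \<longleftrightarrow> w = (u + N - 1) mod N"
  unfolding Suc_mod_if[OF assms(2)] pred_mod_if[OF assms(1)] using assms by auto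

lemma cycle_neighbours_distinct:
  assumes "3 \<le> N" and "u < N"
  shows "u \<noteq> Suc u mod N" and "u \<noteq> (u + N - 1) mod N" and "Suc u mod N \<noteq> (u + N - 1) mod N"
  unfolding Suc_mod_if[OF assms(2)] pred_mod_if[OF assms(2)] using assms by auto

lemma cong_diff_one_iff:
  assumes "j < N"
  shows "[int j - int i = 1] (mod int N) \<longleftrightarrow> j = Suc i mod N"
proof -
  have "[int j - int i = 1] (mod int N) \<longleftrightarrow> [int j = int (Suc i)] (mod int N)"
    by (simp add: cong_iff_dvd_diff algebra_simps)
  also have "\<dots> \<longleftrightarrow> [j = Suc i] (mod N)"
    by (rule cong_int_iff)
  also have "\<dots> \<longleftrightarrow> j = Suc i mod N"
    using assms by (simp add: cong_def)
  finally show ?thesis .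
qed

lemma GN1_adj_iff:
  assumes "i < N" and "j < N"
  shows "GN1_adj N i j \<longleftrightarrow> i \<noteq> j \<and> j \<noteq> Suc i mod N \<and> i \<noteq> Suc j mod N"
proof -
  have "[int j - int i = -1] (mod int N) \<longleftrightarrow> [int i - int j = 1] (mod int N)"
    by (simp add: cong_iff_dvd_diff dvd_diff_commute algebra_simps)
  then show ?thesis
    using cong_diff_one_iff[OF assms(2)] cong_diff_one_iff[OF assms(1)] by (simp add: GN1_adj_def)
qed

lemma nbrs_GN1:
  assumes "u < N"
  shows "nbrs {0..<N} (GN1_adj N) u = {0..<N} - {u, Suc u mod N, (u + N - 1) mod N}"
  using assms eq_Suc_mod_iff[OF assms] by (auto simp: nbrs_def GN1_adj_iff)

lemma card_nbrs_GN1: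
  assumes "3 \<le> N" and "u < N"
  shows "card (nbrs {0..<N} (GN1_adj N) u) = N - 3"
proof -
  have "card {u, Suc u mod N, (u + N - 1) mod N} = 3"
    using cycle_neighbours_distinct[OF assms] by simp
  moreover have "{u, Suc u mod N, (u + N - 1) mod N} \<subseteq> {0..<N}"
    using assms by auto
  ultimately show ?thesis
    unfolding nbrs_GN1[OF assms(2)] by (simp add: card_Diff_subset)
qed

lemma sum_nbrs_GN1:
  fixes f :: "nat \<Rightarrow> 'a::ab_group_add"
  assumes "3 \<le> N" and "u < N"
  shows "(\<Sum>w\<in>nbrs {0..<N} (GN1_adj N) u. f w)
    = (\<Sum>w<N. f w) - (f u + f (Suc u mod N) + f ((u + N - 1) mod N))"
proof -
  have "(\<Sum>w\<in>nbrs {0..<N} (GN1_adj N) u. f w)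
      = (\<Sum>w<N. f w) - (\<Sum>w\<in>{u, Suc u mod N, (u + N - 1) mod N}. f w)"
    unfolding nbrs_GN1[OF assms(2)] using assms(2) by (subst sum_diff) (auto simp: lessThan_atLeast0)
  then show ?thesis
    using cycle_neighbours_distinct[OF assms] by (simp add: add.assoc)
qed

lemma GN1_edges_eq:
  "GN1_edges N = {B. B \<subseteq> {0..<N} \<and> card B = 2} - (\<lambda>i. {i, Suc i mod N}) ` {0..<N}"
proof (intro set_eqI iffI)
  fix B
  assume "B \<in> GN1_edges N"
  then obtain i j where "B = {i, j}" "i < N" "j < N" "GN1_adj N i j"
    unfolding GN1_edges_def by blast
  then show "B \<in> {B. B \<subseteq> {0..<N} \<and> card B = 2} - (\<lambda>i. {i, Suc i mod N}) ` {0..<N}"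
    by (auto simp: GN1_adj_iff doubleton_eq_iff)
next
  fix B
  assume "B \<in> {B. B \<subseteq> {0..<N} \<and> card B = 2} - (\<lambda>i. {i, Suc i mod N}) ` {0..<N}"
  then obtain i j where B: "B = {i, j}" "i \<noteq> j" "i < N" "j < N"
      "B \<notin> (\<lambda>i. {i, Suc i mod N}) ` {0..<N}"
    by (auto simp: card_2_iff)
  then have "GN1_adj N i j"
    by (auto simp: GN1_adj_iff insert_commute)
  with B show "B \<in> GN1_edges N"
    unfolding GN1_edges_def by blast
qed

lemma card_GN1_edges:
  assumes "3 \<le> N"
  shows "card (GN1_edges N) = N * (N - 3) div 2"
proof -
  let ?pairs = "{B. B \<subseteq> {0..<N} \<and> card B = 2}"
  let ?cycle = "(\<lambda>i. {i, Suc i mod N}) ` {0..<N}"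
  have "inj_on (\<lambda>i. {i, Suc i mod N}) {0..<N}"
    using assms by (auto simp: inj_on_def doubleton_eq_iff Suc_mod_if split: if_splits)
  then have "card ?cycle = N"
    by (simp add: card_image)
  moreover have "?cycle \<subseteq> ?pairs"
    using assms by (auto simp: Suc_mod_if)
  moreover have "card ?pairs = N * (N - 1) div 2"
    using n_subsets[of "{0..<N}" 2] by (simp add: choose_two)
  ultimately have "card (GN1_edges N) = N * (N - 1) div 2 - N"
    unfolding GN1_edges_eq by (simp add: card_Diff_subset finite_subset[of _ "Pow {0..<N}"])
  also have "N * (N - 1) = N * (N - 3) + 2 * N"
    using assms by (simp add: algebra_simps diff_mult_distrib2)
  finally show ?thesis
    by simp
qed

lemma sum_reflect_mod:
  fixes F :: "nat \<Rightarrow> 'a::comm_monoid_add"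
  assumes "v < N"
  shows "(\<Sum>w<N. F ((v + N - w) mod N)) = (\<Sum>r<N. F r)"
  by (rule sum.reindex_bij_witness[where i = "\<lambda>r. (v + N - r) mod N" and j = "\<lambda>w. (v + N - w) mod N"])
     (use assms in \<open>auto simp: diff_mod_if\<close>)

lemma cycle_distance_Suc:
  assumes "u < N" and "v < N" and "u \<noteq> v"
  shows "(v + N - Suc u mod N) mod N = (v + N - u) mod N - 1"
  using assms by (auto simp: diff_mod_if Suc_mod_if)

lemma cycle_distance_pred:
  assumes "u < (N::nat)" and "v < N"
  shows "(v + N - (u + N - 1) mod N) mod N = Suc ((v + N - u) mod N) mod N"
proof -
  have "(v + N - u) mod N < N" and "(u + N - 1) mod N < N"
    using assms by simp_all
  then show ?thesis
    unfolding Suc_mod_if[OF \<open>(v + N - u) mod N < N\<close>]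
    unfolding diff_mod_if[OF _ assms(2)] pred_mod_if[OF assms(1)] diff_mod_if[OF assms]
    using assms by (auto simp: le_mod_geq Suc_diff_le)
qed

lemma GN1_hitting_system:
  fixes F :: "nat \<Rightarrow> real"
  assumes "4 \<le> N" and "v < N" and "F 0 = 0" and "F N = 0"
    and recurrence: "\<And>q. 0 < q \<Longrightarrow> q < N
      \<Longrightarrow> F (q - 1) + (real N - 2) * F q + F (Suc q) = (\<Sum>r<N. F r) + (real N - 3)"
  shows "hitting_system {0..<N} (GN1_adj N) v (\<lambda>w. F ((v + N - w) mod N))"
    (is "hitting_system _ _ _ ?h")
  unfolding hitting_system_def
proof (intro conjI ballI impI)
  show "?h v = 0"
    using \<open>F 0 = 0\<close> by simp
  fix u
  assume "u \<in> {0..<N}" and "u \<noteq> v"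
  then have "u < N"
    by simp
  define q where "q = (v + N - u) mod N"
  have q: "0 < q" "q < N"
    using \<open>u < N\<close> \<open>v < N\<close> \<open>u \<noteq> v\<close> by (auto simp: q_def diff_mod_if)
  have h_Suc: "?h (Suc u mod N) = F (q - 1)"
    unfolding cycle_distance_Suc[OF \<open>u < N\<close> \<open>v < N\<close> \<open>u \<noteq> v\<close>] q_def ..
  have h_pred: "?h ((u + N - 1) mod N) = F (Suc q)"
    unfolding cycle_distance_pred[OF \<open>u < N\<close> \<open>v < N\<close>] q_def[symmetric] Suc_mod_if[OF q(2)]
    using \<open>F 0 = 0\<close> \<open>F N = 0\<close> by simp
  have sum_F: "(\<Sum>r<N. F r) = F (q - 1) + (real N - 2) * F q + F (Suc q) - (real N - 3)"
    using recurrence[OF q] by linarith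
  have "3 \<le> N"
    using \<open>4 \<le> N\<close> by simp
  have "(\<Sum>w\<in>nbrs {0..<N} (GN1_adj N) u. ?h w) = (\<Sum>r<N. F r) - (F q + F (q - 1) + F (Suc q))"
    unfolding sum_nbrs_GN1[OF \<open>3 \<le> N\<close> \<open>u < N\<close>] sum_reflect_mod[OF \<open>v < N\<close>] h_Suc h_pred q_def ..
  also have "\<dots> = (real N - 3) * (F q - 1)"
    unfolding sum_F by (simp add: algebra_simps)
  finally show "?h u = 1 + (\<Sum>w\<in>nbrs {0..<N} (GN1_adj N) u. ?h w) / real (card (nbrs {0..<N} (GN1_adj N) u))"
    using \<open>4 \<le> N\<close> card_nbrs_GN1[of N u] \<open>u < N\<close> by (simp add: q_def of_nat_diff)
qed

section \<open>The explicit solution\<close>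

locale GN1_profile =
  fixes N :: nat
  assumes N_ge_5: "5 \<le> N" and odd_N: "odd N"
begin

definition \<Delta> :: real where "\<Delta> = sqrt (real N * (real N - 4))"
definition \<rho> :: real where "\<rho> = (real N - 2 + \<Delta>) / 2"
definition \<kappa> :: real where "\<kappa> = real N * (real N - 3) / (\<Delta> * (\<rho> ^ N + 1))"

definition profile :: "nat \<Rightarrow> real" where
  "profile n = \<kappa> * (\<rho> ^ N - 1 + (-\<rho>) ^ n + (-\<rho>) ^ (N - n))"

lemma \<Delta>_pos: "0 < \<Delta>"
  using N_ge_5 by (simp add: \<Delta>_def)

lemma \<Delta>_squared: "\<Delta>\<^sup>2 = real N * (real N - 4)"
  using N_ge_5 by (simp add: \<Delta>_def)

lemma \<rho>_pos: "0 < \<rho>"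
  using N_ge_5 \<Delta>_pos by (simp add: \<rho>_def)

lemma \<rho>_power_plus_1_pos: "0 < \<rho> ^ N + 1"
  using \<rho>_pos by (simp add: add_pos_pos)

lemma characteristic_root: "(-\<rho>)\<^sup>2 + (real N - 2) * (-\<rho>) + 1 = 0"
proof -
  have "4 * ((-\<rho>)\<^sup>2 + (real N - 2) * (-\<rho>) + 1) = \<Delta>\<^sup>2 - real N * (real N - 4)"
    by (simp add: \<rho>_def power2_eq_square field_simps)
  then show ?thesis
    using \<Delta>_squared by simp
qed

lemma profile_0: "profile 0 = 0"
  using odd_N by (simp add: profile_def)

lemma profile_N: "profile N = 0"
  using odd_N by (simp add: profile_def)

lemma profile_recurrence:
  assumes "0 < q" and "q < N"
  shows "profile (q - 1) + (real N - 2) * profile q + profile (Suc q) = real N * \<kappa> * (\<rho> ^ N - 1)"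
proof -
  define p m where "p = q - 1" and "m = N - Suc q"
  have q: "q = Suc p" and exponents: "N - p = m + 2" "N - Suc p = m + 1" "N - Suc (Suc p) = m"
    using assms by (simp_all add: p_def m_def)
  have "profile (q - 1) + (real N - 2) * profile q + profile (Suc q)
      = \<kappa> * (real N * (\<rho> ^ N - 1)
          + ((-\<rho>) ^ p + (-\<rho>) ^ m) * ((-\<rho>)\<^sup>2 + (real N - 2) * (-\<rho>) + 1))"
    unfolding profile_def q by (simp add: exponents algebra_simps power2_eq_square)
  then show ?thesis
    using characteristic_root by simp
qed

lemma sum_boundary_terms:
  "(\<Sum>r<N. (-\<rho>) ^ r + (-\<rho>) ^ (N - r)) = (1 - \<rho>) * (1 + \<rho> ^ N) / (1 + \<rho>)"
proof -
  have geometric: "(\<Sum>r<N. (-\<rho>) ^ r) = (1 + \<rho> ^ N) / (1 + \<rho>)"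
    using sum_gp_strict[of "-\<rho>" N] odd_N \<rho>_pos by (simp add: field_simps)
  have "(\<Sum>r<N. (-\<rho>) ^ (N - r)) = (\<Sum>r<N. (-\<rho>) ^ Suc r)"
    by (rule sum.reindex_bij_witness[where i = "\<lambda>r. N - Suc r" and j = "\<lambda>r. N - Suc r"])
       (auto simp: Suc_diff_Suc)
  also have "\<dots> = - \<rho> * ((1 + \<rho> ^ N) / (1 + \<rho>))"
    by (simp only: power_Suc sum_distrib_left[symmetric] geometric)
  finally show ?thesis
    using \<rho>_pos by (simp add: sum.distrib geometric field_simps)
qed

(* The normalisation that determines kappa. *)
lemma \<kappa>_boundary: "\<kappa> * ((1 - \<rho>) * (1 + \<rho> ^ N)) = - (real N - 3) * (1 + \<rho>)"
proof -
  have root: "real N * (1 - \<rho>) = - (\<Delta> * (1 + \<rho>))"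
  proof -
    have "2 * (real N * (1 - \<rho>) + \<Delta> * (1 + \<rho>)) = \<Delta>\<^sup>2 - real N * (real N - 4)"
      by (simp add: \<rho>_def power2_eq_square field_simps)
    then show ?thesis
      using \<Delta>_squared by simp
  qed
  have \<kappa>: "\<kappa> * \<Delta> * (\<rho> ^ N + 1) = real N * (real N - 3)"
    unfolding \<kappa>_def using \<Delta>_pos \<rho>_power_plus_1_pos by simp
  have "\<Delta> * (\<kappa> * ((1 - \<rho>) * (1 + \<rho> ^ N))) = \<kappa> * \<Delta> * (\<rho> ^ N + 1) * (1 - \<rho>)"
    by (simp add: algebra_simps)
  also have "\<dots> = (real N - 3) * (real N * (1 - \<rho>))"
    unfolding \<kappa> by (simp add: algebra_simps)
  also have "\<dots> = \<Delta> * (- (real N - 3) * (1 + \<rho>))"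
    unfolding root by (simp add: algebra_simps)
  finally show ?thesis
    using \<Delta>_pos by simp
qed

lemma sum_profile: "(\<Sum>r<N. profile r) = real N * \<kappa> * (\<rho> ^ N - 1) - (real N - 3)"
proof -
  have "(\<Sum>r<N. profile r) = (\<Sum>r<N. \<kappa> * (\<rho> ^ N - 1) + \<kappa> * ((-\<rho>) ^ r + (-\<rho>) ^ (N - r)))"
    by (simp add: profile_def algebra_simps)
  also have "\<dots> = real N * \<kappa> * (\<rho> ^ N - 1) + \<kappa> * (\<Sum>r<N. (-\<rho>) ^ r + (-\<rho>) ^ (N - r))"
    by (simp add: sum.distrib sum_distrib_left distrib_left)
  also have "\<kappa> * (\<Sum>r<N. (-\<rho>) ^ r + (-\<rho>) ^ (N - r)) = - (real N - 3)"
    using \<kappa>_boundary \<rho>_pos by (simp add: sum_boundary_terms field_simps)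
  finally show ?thesis
    by simp
qed

lemma profile_eq:
  assumes "q \<le> N"
  shows "profile q = \<kappa> * (\<rho> ^ N - 1 + (-1) ^ q * (\<rho> ^ q - \<rho> ^ (N - q)))"
proof -
  have "(-1 :: real) ^ (N - q) = - ((-1) ^ q)"
    using assms odd_N by (simp add: minus_one_power_iff even_diff_nat)
  then show ?thesis
    unfolding profile_def by (simp add: power_minus[of \<rho>] algebra_simps)
qed

end

lemma cong_diff_imp_eq_diff_mod:
  assumes "u < N" and "q < N" and "[int q = int v - int u] (mod int N)"
  shows "q = (v + N - u) mod N"
proof -
  have "int (v + N - u) = (int v - int u) + int N"
    using assms(1) by simp
  then have "[int ((v + N - u) mod N) = int v - int u] (mod int N)"
    by (simp add: cong_def of_nat_mod)
  with assms(3) have "[int q = int ((v + N - u) mod N)] (mod int N)"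
    by (metis cong_sym cong_trans)
  then show ?thesis
    using assms(1,2) by (simp add: cong_int_iff cong_def)
qed

theorem corollary4p2:
  fixes N u v q :: nat
  defines "\<Delta> \<equiv> sqrt (real N * (real N - 4))"
  defines "\<rho> \<equiv> (real N - 2 + \<Delta>) / 2"
  assumes "N \<ge> 5" and "odd N"
    and "u < N" and "v < N" and "q < N" and "[int q = int v - int u] (mod int N)"
  shows "card (GN1_edges N) = N * (N - 3) div 2
     \<and> hitting_time {0..<N} (GN1_adj N) u v
         = real N * (real N - 3) / (\<Delta> * (\<rho> ^ N + 1))
           * (\<rho> ^ N - 1 + (-1) ^ q * (\<rho> ^ q - \<rho> ^ (N - q)))"
proof
  show "card (GN1_edges N) = N * (N - 3) div 2"
    using assms(3) by (intro card_GN1_edges) simp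
  interpret G: GN1_profile N
    using assms(3,4) by unfold_locales
  have "G.profile (r - 1) + (real N - 2) * G.profile r + G.profile (Suc r)
      = (\<Sum>r<N. G.profile r) + (real N - 3)" if "0 < r" and "r < N" for r
    using G.profile_recurrence[OF that] by (simp add: G.sum_profile)
  then have "hitting_system {0..<N} (GN1_adj N) v (\<lambda>w. G.profile ((v + N - w) mod N))"
    using assms(3,6) G.profile_0 G.profile_N by (intro GN1_hitting_system) simp_all
  moreover have "nbrs {0..<N} (GN1_adj N) w \<noteq> {}" if "w \<in> {0..<N}" for w
    using card_nbrs_GN1[of N w] that assms(3) by fastforce
  ultimately have "hitting_time {0..<N} (GN1_adj N) u v = G.profile ((v + N - u) mod N)"
    using assms(5) by (intro hitting_time_eq_solution) auto
  also have "(v + N - u) mod N = q"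
    using cong_diff_imp_eq_diff_mod[OF assms(5,7,8)] ..
  also have "G.profile q = G.\<kappa> * (G.\<rho> ^ N - 1 + (-1) ^ q * (G.\<rho> ^ q - G.\<rho> ^ (N - q)))"
    using assms(7) by (intro G.profile_eq) simp
  finally show "hitting_time {0..<N} (GN1_adj N) u v
         = real N * (real N - 3) / (\<Delta> * (\<rho> ^ N + 1))
           * (\<rho> ^ N - 1 + (-1) ^ q * (\<rho> ^ q - \<rho> ^ (N - q)))"
    unfolding \<Delta>_def \<rho>_def G.\<kappa>_def G.\<rho>_def G.\<Delta>_def .
qed

end
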